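(* For every $N>1$ there exist connected graphs $H\subsetneq G$ ($H$ a proper subgraph of $G$) with $\chi(H)=\chi(G)$ satisfying $N\,\mathrm{sn}(H)<\mathrm{sn}(G)$. The same holds with $\underline{\mathrm{lcs}}$ in place of $\mathrm{sn}$: for every $N>1$ there exist such $H\subsetneq G$ with $N\,\underline{\mathrm{lcs}}(H)<\underline{\mathrm{lcs}}(G)$.
   Context: All graphs are finite and simple. For a graph $G=(V,E)$ with $k=\chi(G)$, a proper $k$-colouring is a map $c:V\to[k]$ with $c(u)\neq c(v)$ for every edge $uv$. A set $S\subseteq V$ is a determining set for $(G,c)$ if there is no proper $k$-colouring $c'\neq c$ with $c'(s)=c(s)$ for all $s\in S$; a critical set is an inclusion-minimal determining set. $\mathrm{scs}(G,c)$ and $\mathrm{lcs}(G,c)$ are the sizes of a smallest resp. largest critical set for $(G,c)$. $\mathrm{sn}(G)=\min_c\mathrm{scs}(G,c)$ and $\underline{\mathrm{lcs}}(G)=\min_c\mathrm{lcs}(G,c)$, minima over all proper $\chi(G)$-colourings $c$. *)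

theory Defs
  imports Complex_Main "HOL-Library.FuncSet"
begin

type_synonym graph = "nat set \<times> nat set set"

definition verts :: "graph \<Rightarrow> nat set" where "verts G = fst G"
definition edges :: "graph \<Rightarrow> nat set set" where "edges G = snd G"

definition is_graph :: "graph \<Rightarrow> bool" where
  "is_graph G \<longleftrightarrow> finite (verts G) \<and>
     (\<forall>e\<in>edges G. \<exists>u v. e = {u, v} \<and> u \<noteq> v \<and> u \<in> verts G \<and> v \<in> verts G)"

definition connected_graph :: "graph \<Rightarrow> bool" where
  "connected_graph G \<longleftrightarrow> verts G \<noteq> {} \<and>
     (\<forall>u\<in>verts G. \<forall>v\<in>verts G. (u, v) \<in> {(x, y). {x, y} \<in> edges G}\<^sup>*)"

definition subgraph :: "graph \<Rightarrow> graph \<Rightarrow> bool" where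
  "subgraph H G \<longleftrightarrow> verts H \<subseteq> verts G \<and> edges H \<subseteq> edges G"

definition proper_subgraph :: "graph \<Rightarrow> graph \<Rightarrow> bool" where
  "proper_subgraph H G \<longleftrightarrow> subgraph H G \<and> H \<noteq> G"

text \<open>Proper k-colourings c : V \<rightarrow> [k], as extensional functions (undefined off V),
so that two colourings are equal iff they agree on V.\<close>
definition proper_colouring :: "graph \<Rightarrow> nat \<Rightarrow> (nat \<Rightarrow> nat) \<Rightarrow> bool" where
  "proper_colouring G k c \<longleftrightarrow> c \<in> verts G \<rightarrow>\<^sub>E {1..k} \<and>
     (\<forall>u v. {u, v} \<in> edges G \<longrightarrow> c u \<noteq> c v)"

definition chi :: "graph \<Rightarrow> nat" where
  "chi G = (LEAST k. \<exists>c. proper_colouring G k c)"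

definition determining :: "graph \<Rightarrow> (nat \<Rightarrow> nat) \<Rightarrow> nat set \<Rightarrow> bool" where
  "determining G c S \<longleftrightarrow> S \<subseteq> verts G \<and>
     \<not> (\<exists>c'. proper_colouring G (chi G) c' \<and> c' \<noteq> c \<and> (\<forall>s\<in>S. c' s = c s))"

definition critical :: "graph \<Rightarrow> (nat \<Rightarrow> nat) \<Rightarrow> nat set \<Rightarrow> bool" where
  "critical G c S \<longleftrightarrow> determining G c S \<and> (\<forall>T. T \<subset> S \<longrightarrow> \<not> determining G c T)"

definition scs :: "graph \<Rightarrow> (nat \<Rightarrow> nat) \<Rightarrow> nat" where
  "scs G c = Min {card S | S. critical G c S}"

definition lcs :: "graph \<Rightarrow> (nat \<Rightarrow> nat) \<Rightarrow> nat" where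
  "lcs G c = Max {card S | S. critical G c S}"

definition sn :: "graph \<Rightarrow> nat" where
  "sn G = Min {scs G c | c. proper_colouring G (chi G) c}"

definition lcs_min :: "graph \<Rightarrow> nat" where
  "lcs_min G = Min {lcs G c | c. proper_colouring G (chi G) c}"

end

theory Submission
  imports Defs
begin

(*
  The windmill (friendship) graph W_n consists of n triangles {0, 2i+1, 2i+2} sharing the
  centre 0. All W_n with n >= 1 have chromatic number 3, and W_1 is a triangle, a proper
  subgraph of W_n for n > 1. The two outer vertices of a blade are adjacent twins, so
  exchanging their colours in a proper colouring gives another proper colouring; hence every
  determining set meets every blade, and sn W_n >= n. Since every critical set has size
  between scs and lcs, also lcs_min W_n >= n, whereas sn W_1 and lcs_min W_1 are at most
  |V(W_1)| = 3. Taking n > 3N gives both inequalities.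
*)

lemma finite_critical_cards:
  assumes "is_graph G"
  shows "finite {card S | S. critical G c S}"
proof -
  have "{card S | S. critical G c S} \<subseteq> card ` Pow (verts G)"
    by (auto simp: critical_def determining_def)
  moreover have "finite (card ` Pow (verts G))"
    using assms by (simp add: is_graph_def)
  ultimately show ?thesis
    by (rule finite_subset)
qed

lemma finite_colouring_values:
  assumes "finite (verts G)"
  shows "finite {f c | c. proper_colouring G k c}"
proof -
  have "{f c | c. proper_colouring G k c} \<subseteq> f ` (verts G \<rightarrow>\<^sub>E {1..k})"
    by (auto simp: proper_colouring_def)
  then show ?thesis
    using assms by (meson finite_PiE finite_atLeastAtMost finite_imageI finite_subset)
qed

lemma chi_colouring_exists:
  assumes "is_graph G"
  shows "\<exists>c. proper_colouring G (chi G) c"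
proof -
  let ?V = "verts G"
  obtain h where h: "bij_betw h ?V {0..<card ?V}"
    using assms ex_bij_betw_finite_nat by (auto simp: is_graph_def)
  define c where "c = restrict (\<lambda>v. h v + 1) ?V"
  have "proper_colouring G (card ?V) c"
    unfolding proper_colouring_def
  proof (intro conjI allI impI)
    show "c \<in> ?V \<rightarrow>\<^sub>E {1..card ?V}"
      using bij_betw_apply[OF h] by (force simp: c_def)
  next
    fix u v assume "{u, v} \<in> edges G"
    then have "u \<noteq> v" "u \<in> ?V" "v \<in> ?V"
      using assms by (auto simp: is_graph_def doubleton_eq_iff)
    then show "c u \<noteq> c v"
      using bij_betw_imp_inj_on[OF h] by (auto simp: c_def inj_on_def)
  qed
  then have "\<exists>c. proper_colouring G (card ?V) c" by blast
  then show ?thesis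
    unfolding chi_def by (rule LeastI)
qed

lemma determining_verts:
  assumes "proper_colouring G k c"
  shows "determining G c (verts G)"
  using assms unfolding determining_def proper_colouring_def
  by (metis PiE_iff extensionalityI subset_refl)

lemma critical_subset_exists:
  assumes "finite S" "determining G c S"
  obtains T where "T \<subseteq> S" "critical G c T"
proof -
  obtain T where T: "T \<subseteq> S" "determining G c T"
    and least: "\<And>T'. T' \<subseteq> S \<Longrightarrow> determining G c T' \<Longrightarrow> card T \<le> card T'"
    using ex_has_least_nat[of "\<lambda>T. T \<subseteq> S \<and> determining G c T" S card] assms(2) by blast
  have "critical G c T"
    unfolding critical_def
  proof (intro conjI allI impI notI)
    fix T' assume "T' \<subset> T" "determining G c T'"
    moreover have "finite T" using T(1) assms(1) by (rule finite_subset)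
    ultimately show False
      using least[of T'] T(1) psubset_card_mono[of T T'] by auto
  qed (fact T(2))
  with T(1) show ?thesis by (rule that)
qed

lemma sn_le_card_determining:
  assumes G: "is_graph G" and c: "proper_colouring G (chi G) c" and S: "determining G c S"
  shows "sn G \<le> card S"
proof -
  have fin: "finite (verts G)" using G by (simp add: is_graph_def)
  then have "finite S" using S by (auto simp: determining_def intro: finite_subset)
  then obtain T where T: "T \<subseteq> S" "critical G c T"
    using S by (rule critical_subset_exists)
  have "sn G \<le> scs G c"
    unfolding sn_def using fin c by (intro Min_le finite_colouring_values) auto
  also have "scs G c \<le> card T"
    unfolding scs_def using finite_critical_cards[OF G] T(2) by (intro Min_le) auto
  also have "card T \<le> card S" using \<open>finite S\<close> T(1) by (rule card_mono)
  finally show ?thesis .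
qed

lemma sn_lower_bound:
  assumes G: "is_graph G"
    and bound: "\<And>c S. proper_colouring G (chi G) c \<Longrightarrow> determining G c S \<Longrightarrow> m \<le> card S"
  shows "m \<le> sn G"
proof -
  have fin: "finite (verts G)" using G by (simp add: is_graph_def)
  obtain c0 where "proper_colouring G (chi G) c0" using chi_colouring_exists[OF G] ..
  then obtain c where c: "proper_colouring G (chi G) c" "sn G = scs G c"
    using Min_in[OF finite_colouring_values[OF fin, of "scs G" "chi G"]] unfolding sn_def by auto
  obtain T where "critical G c T"
    using critical_subset_exists[OF fin determining_verts[OF c(1)]] by blast
  then obtain S where "critical G c S" "scs G c = card S"
    using Min_in[OF finite_critical_cards[OF G, of c]] unfolding scs_def by auto
  then show ?thesis
    using bound[OF c(1)] c(2) by (simp add: critical_def)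
qed

lemma sn_le_lcs_min:
  assumes G: "is_graph G"
  shows "sn G \<le> lcs_min G"
proof -
  have fin: "finite (verts G)" using G by (simp add: is_graph_def)
  obtain c0 where "proper_colouring G (chi G) c0" using chi_colouring_exists[OF G] ..
  then obtain c where c: "proper_colouring G (chi G) c" "lcs_min G = lcs G c"
    using Min_in[OF finite_colouring_values[OF fin, of "lcs G" "chi G"]] unfolding lcs_min_def by auto
  obtain T where T: "critical G c T"
    using critical_subset_exists[OF fin determining_verts[OF c(1)]] by blast
  have "sn G \<le> card T"
    using G c(1) T unfolding critical_def by (blast intro: sn_le_card_determining)
  also have "card T \<le> lcs G c"
    unfolding lcs_def using finite_critical_cards[OF G] T by (intro Max_ge) auto
  finally show ?thesis using c(2) by simp
qed

lemma lcs_min_le_card_verts: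
  assumes G: "is_graph G"
  shows "lcs_min G \<le> card (verts G)"
proof -
  have fin: "finite (verts G)" using G by (simp add: is_graph_def)
  obtain c where c: "proper_colouring G (chi G) c" using chi_colouring_exists[OF G] ..
  obtain T where "critical G c T"
    using critical_subset_exists[OF fin determining_verts[OF c]] by blast
  have "lcs_min G \<le> lcs G c"
    unfolding lcs_min_def using fin c by (intro Min_le finite_colouring_values) auto
  also have "lcs G c \<le> card (verts G)"
    unfolding lcs_def
  proof (rule Max.boundedI)
    show "finite {card S |S. critical G c S}" using G by (rule finite_critical_cards)
    show "{card S |S. critical G c S} \<noteq> {}" using \<open>critical G c T\<close> by blast
    fix k assume "k \<in> {card S |S. critical G c S}"
    then obtain S where "k = card S" "S \<subseteq> verts G"
      by (auto simp: critical_def determining_def)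
    with fin show "k \<le> card (verts G)" by (simp add: card_mono)
  qed
  finally show ?thesis .
qed

lemma determining_meets_true_twins:
  assumes G: "is_graph G" and c: "proper_colouring G (chi G) c" and S: "determining G c S"
    and ab: "{a, b} \<in> edges G"
    and twins: "\<And>v. v \<notin> {a, b} \<Longrightarrow> {a, v} \<in> edges G \<longleftrightarrow> {b, v} \<in> edges G"
  shows "a \<in> S \<or> b \<in> S"
proof (rule ccontr)
  assume nS: "\<not> (a \<in> S \<or> b \<in> S)"
  have V: "a \<in> verts G" "b \<in> verts G"
    using G ab by (auto simp: is_graph_def doubleton_eq_iff)
  have "c a \<noteq> c b" using c ab by (simp add: proper_colouring_def)
  define s where "s x = (if x = a then b else if x = b then a else x)" for x
  \<comment> \<open>The transposition of the twins is a graph automorphism, so c \<circ> s is again proper.\<close>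
  have swap_edge: "{s u, s v} \<in> edges G" if uv: "{u, v} \<in> edges G" for u v
  proof (cases "u \<in> {a, b} \<and> v \<in> {a, b}")
    case True
    have "u \<noteq> v" using c uv by (auto simp: proper_colouring_def)
    with True have "{s u, s v} = {a, b}" by (auto simp: s_def)
    with ab show ?thesis by simp
  next
    case False
    have twin_edge: "{x, w} \<in> edges G"
      if "{y, w} \<in> edges G" "x \<in> {a, b}" "y \<in> {a, b}" "w \<notin> {a, b}" for x y w
      using that twins[of w] by blast
    from False consider "u \<notin> {a, b}" "v \<notin> {a, b}" | "u \<in> {a, b}" "v \<notin> {a, b}"
      | "u \<notin> {a, b}" "v \<in> {a, b}" by blast
    then show ?thesis
    proof cases
      case 1
      with uv show ?thesis by (simp add: s_def)
    next
      case 2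
      then have "s u \<in> {a, b}" "s v = v" by (auto simp: s_def)
      with 2 uv twin_edge[of u v "s u"] show ?thesis by simp
    next
      case 3
      then have "s v \<in> {a, b}" "s u = u" by (auto simp: s_def)
      moreover have "{v, u} \<in> edges G" using uv by (simp add: insert_commute)
      ultimately show ?thesis using 3 twin_edge[of v u "s v"] by (simp add: insert_commute)
    qed
  qed
  have swapped: "(c \<circ> s) a \<noteq> c a"
    using \<open>c a \<noteq> c b\<close> by (simp add: s_def)
  have "s x \<in> verts G \<longleftrightarrow> x \<in> verts G" for x
    using V by (auto simp: s_def)
  then have "c \<circ> s \<in> verts G \<rightarrow>\<^sub>E {1..chi G}"
    using c unfolding proper_colouring_def by (auto simp: PiE_iff extensional_def)
  with c swap_edge have "proper_colouring G (chi G) (c \<circ> s)"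
    unfolding proper_colouring_def by simp
  moreover from swapped have "c \<circ> s \<noteq> c" by metis
  moreover have "\<forall>x\<in>S. (c \<circ> s) x = c x"
    using nS by (auto simp: s_def)
  ultimately show False
    using S unfolding determining_def by blast
qed

lemma connected_graph_dominating_vertex:
  assumes "r \<in> verts G" and adjacent: "\<And>v. v \<in> verts G \<Longrightarrow> v \<noteq> r \<Longrightarrow> {r, v} \<in> edges G"
  shows "connected_graph G"
  unfolding connected_graph_def
proof (intro conjI ballI)
  show "verts G \<noteq> {}" using assms(1) by blast
  let ?R = "{(x, y). {x, y} \<in> edges G}"
  have to_r: "(v, r) \<in> ?R\<^sup>*" and from_r: "(r, v) \<in> ?R\<^sup>*" if "v \<in> verts G" for v
    using adjacent[OF that] by (cases "v = r"; auto simp: insert_commute)+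
  fix u v assume "u \<in> verts G" "v \<in> verts G"
  then show "(u, v) \<in> ?R\<^sup>*" using to_r from_r by (meson rtrancl_trans)
qed

lemma chi_eq_3I:
  assumes G: "is_graph G" and c: "proper_colouring G 3 c"
    and triangle: "{x, y} \<in> edges G" "{x, z} \<in> edges G" "{y, z} \<in> edges G"
  shows "chi G = 3"
  unfolding chi_def
proof (rule Least_equality)
  show "\<exists>c. proper_colouring G 3 c" using c by blast
  fix k assume "\<exists>d. proper_colouring G k d"
  then obtain d where d: "proper_colouring G k d" ..
  have "x \<in> verts G" "y \<in> verts G" "z \<in> verts G"
    using G triangle by (auto simp: is_graph_def doubleton_eq_iff)
  then have "d x \<in> {1..k}" "d y \<in> {1..k}" "d z \<in> {1..k}"
    "d x \<noteq> d y" "d x \<noteq> d z" "d y \<noteq> d z"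
    using d triangle unfolding proper_colouring_def by auto
  then show "3 \<le> k" by auto
qed

definition windmill :: "nat \<Rightarrow> graph" where
  "windmill n = ({0..2*n}, {{0, v} | v. v \<in> {1..2*n}} \<union> {{2*i+1, 2*i+2} | i. i < n})"

lemma verts_windmill [simp]: "verts (windmill n) = {0..2*n}"
  by (simp add: windmill_def verts_def)

lemma edges_windmill:
  "edges (windmill n) = {{0, v} | v. v \<in> {1..2*n}} \<union> {{2*i+1, 2*i+2} | i. i < n}"
  by (simp add: windmill_def edges_def)

lemma is_graph_windmill: "is_graph (windmill n)"
  unfolding is_graph_def edges_windmill by force

lemma connected_graph_windmill: "connected_graph (windmill n)"
  by (rule connected_graph_dominating_vertex[of 0]) (auto simp: edges_windmill)

definition windmill_colouring :: "nat \<Rightarrow> nat \<Rightarrow> nat" where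
  "windmill_colouring n = restrict (\<lambda>v. if v = 0 then 1 else if odd v then 2 else 3) {0..2*n}"

lemma proper_colouring_windmill: "proper_colouring (windmill n) 3 (windmill_colouring n)"
  unfolding proper_colouring_def
proof (intro conjI allI impI)
  show "windmill_colouring n \<in> verts (windmill n) \<rightarrow>\<^sub>E {1..3}"
    by (auto simp: windmill_colouring_def)
  fix u v assume "{u, v} \<in> edges (windmill n)"
  then consider w where "{u, v} = {0, w}" "w \<in> {1..2*n}"
    | i where "{u, v} = {2*i+1, 2*i+2}" "i < n"
    unfolding edges_windmill by blast
  then show "windmill_colouring n u \<noteq> windmill_colouring n v"
  proof cases
    case 1
    then show ?thesis by (auto simp: windmill_colouring_def doubleton_eq_iff)
  next
    case 2
    then have "windmill_colouring n (2*i+1) = 2" "windmill_colouring n (2*i+2) = 3"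
      by (simp_all add: windmill_colouring_def)
    with 2 show ?thesis by (auto simp: doubleton_eq_iff)
  qed
qed

lemma chi_windmill:
  assumes "n \<ge> 1"
  shows "chi (windmill n) = 3"
  by (rule chi_eq_3I[OF is_graph_windmill proper_colouring_windmill, where x = 0 and y = 1 and z = 2])
     (use assms in \<open>auto simp: edges_windmill\<close>)

lemma windmill_blade_edge_iff:
  assumes "v \<notin> {2*i+1, 2*i+2}" "x \<in> {2*i+1, 2*i+2}"
  shows "{x, v} \<in> edges (windmill n) \<longleftrightarrow> v = 0 \<and> i < n"
  using assms unfolding edges_windmill by (auto simp: doubleton_eq_iff) presburger+

lemma card_determining_windmill:
  assumes c: "proper_colouring (windmill n) (chi (windmill n)) c"
    and S: "determining (windmill n) c S"
  shows "n \<le> card S"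
proof -
  have "finite S" using S by (auto simp: determining_def intro: finite_subset)
  \<comment> \<open>S meets every blade, and the map below sends blade i to its index.\<close>
  have "i \<in> (\<lambda>x. (x - 1) div 2) ` S" if "i < n" for i
  proof -
    have "2*i+1 \<in> S \<or> 2*i+2 \<in> S"
      using is_graph_windmill c S
    proof (rule determining_meets_true_twins)
      show "{2*i+1, 2*i+2} \<in> edges (windmill n)" using \<open>i < n\<close> by (auto simp: edges_windmill)
    qed (simp add: windmill_blade_edge_iff)
    then show ?thesis by force
  qed
  then have "card {..<n} \<le> card ((\<lambda>x. (x - 1) div 2) ` S)"
    using \<open>finite S\<close> by (intro card_mono) auto
  also have "\<dots> \<le> card S" using \<open>finite S\<close> by (rule card_image_le)
  finally show ?thesis by simp
qed

lemma sn_windmill_le: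
  assumes "n \<ge> 1"
  shows "sn (windmill n) \<le> n + 1"
proof -
  let ?c = "windmill_colouring n"
  let ?S = "insert 0 ((\<lambda>i. 2*i+1) ` {..<n})"
  have "determining (windmill n) ?c ?S"
    unfolding determining_def chi_windmill[OF assms]
  proof (intro conjI notI)
    show "?S \<subseteq> verts (windmill n)" by auto
    assume "\<exists>d. proper_colouring (windmill n) 3 d \<and> d \<noteq> ?c \<and> (\<forall>s\<in>?S. d s = ?c s)"
    then obtain d where d: "proper_colouring (windmill n) 3 d" "d \<noteq> ?c" "\<forall>s\<in>?S. d s = ?c s"
      by blast
    have "d v = ?c v" if v: "v \<in> {0..2*n}" for v
    proof (cases "v = 0 \<or> odd v")
      case True
      then have "v \<in> ?S"
        using v by (auto elim!: oddE)
      then show ?thesis using d(3) by blast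
    next
      case False
      define i where "i = v div 2 - 1"
      have i: "i < n" "v = 2*i+2"
        using False v unfolding i_def by auto
      have "{0, v} \<in> edges (windmill n)" "{2*i+1, v} \<in> edges (windmill n)"
        using i v False by (auto simp: edges_windmill)
      then have "d v \<noteq> d 0" "d v \<noteq> d (2*i+1)"
        using d(1) unfolding proper_colouring_def by (metis insert_commute)+
      moreover have "d 0 = 1" "d (2*i+1) = 2"
        using d(3) i assms by (auto simp: windmill_colouring_def)
      moreover have "d v \<in> {1..3}"
        using d(1) v by (auto simp: proper_colouring_def)
      ultimately show ?thesis
        using False v by (auto simp: windmill_colouring_def)
    qed
    then have "d = ?c"
      using d(1) proper_colouring_windmill[of n] unfolding proper_colouring_def
      by (intro PiE_ext[of d "{0..2*n}" "\<lambda>_. {1..3}"]) auto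
    with d(2) show False ..
  qed
  then have "sn (windmill n) \<le> card ?S"
    using is_graph_windmill proper_colouring_windmill chi_windmill[OF assms]
    by (intro sn_le_card_determining) auto
  also have "card ?S = n + 1"
    by (subst card_insert_disjoint) (auto simp: card_image inj_on_def)
  finally show ?thesis .
qed

lemma sn_windmill_ge: "n \<le> sn (windmill n)"
  using is_graph_windmill card_determining_windmill by (rule sn_lower_bound)

lemma lcs_min_windmill_ge: "n \<le> lcs_min (windmill n)"
  using sn_windmill_ge[of n] sn_le_lcs_min[OF is_graph_windmill, of n] by simp

lemma proper_subgraph_windmill:
  assumes "m < n"
  shows "proper_subgraph (windmill m) (windmill n)"
proof -
  have "2*n \<notin> verts (windmill m)" "2*n \<in> verts (windmill n)"
    using assms by simp_all
  then have "windmill m \<noteq> windmill n" by metis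
  with assms show ?thesis
    unfolding proper_subgraph_def subgraph_def edges_windmill by auto
qed

theorem proposition6:
  shows "(\<forall>N::real. N > 1 \<longrightarrow>
            (\<exists>G H. is_graph G \<and> is_graph H \<and> connected_graph G \<and> connected_graph H \<and>
                   proper_subgraph H G \<and> chi H = chi G \<and> N * real (sn H) < real (sn G))) \<and>
         (\<forall>N::real. N > 1 \<longrightarrow>
            (\<exists>G H. is_graph G \<and> is_graph H \<and> connected_graph G \<and> connected_graph H \<and>
                   proper_subgraph H G \<and> chi H = chi G \<and> N * real (lcs_min H) < real (lcs_min G)))"
proof -
  have "\<exists>G H. is_graph G \<and> is_graph H \<and> connected_graph G \<and> connected_graph H \<and>
      proper_subgraph H G \<and> chi H = chi G \<and>
      N * real (sn H) < real (sn G) \<and> N * real (lcs_min H) < real (lcs_min G)"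
    if "N > 1" for N :: real
  proof -
    define n where "n = nat \<lceil>3 * N\<rceil> + 1"
    have "3 * N < real n" "n \<ge> 2"
      using \<open>N > 1\<close> unfolding n_def by linarith+
    have "real (sn (windmill 1)) \<le> 3" "real (lcs_min (windmill 1)) \<le> 3"
      using sn_windmill_le[of 1] lcs_min_le_card_verts[OF is_graph_windmill, of 1] by simp_all
    then have "N * real (sn (windmill 1)) \<le> N * 3" "N * real (lcs_min (windmill 1)) \<le> N * 3"
      using \<open>N > 1\<close> by (simp_all add: mult_left_mono)
    with \<open>3 * N < real n\<close> sn_windmill_ge[of n] lcs_min_windmill_ge[of n]
    have "N * real (sn (windmill 1)) < real (sn (windmill n))"
      "N * real (lcs_min (windmill 1)) < real (lcs_min (windmill n))"
      by linarith+
    moreover have "chi (windmill 1) = chi (windmill n)"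
      "proper_subgraph (windmill 1) (windmill n)"
      using \<open>n \<ge> 2\<close> by (simp_all add: chi_windmill proper_subgraph_windmill)
    ultimately show ?thesis
      using is_graph_windmill connected_graph_windmill by blast
  qed
  then show ?thesis by blast
qed

end
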